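(* Let $f:(0,\infty)\to\mathbb{R}$ be a convex function with $f(1)=0$, and assume that the function $g:(0,\infty)\to\mathbb{R}$ defined by $g(t)=-t f(t)$ is also convex. Let $P$ and $Q$ be two probability distributions on a finite set $\mathcal{A}$ that are positive on $\mathcal{A}$. Then $$\min_{x\in\mathcal{A}}\frac{P(x)}{Q(x)}\cdot D_f(P\|Q)\;\le\; -D_g(P\|Q)-f\bigl(1+\chi^2(P,Q)\bigr)\;\le\;\max_{x\in\mathcal{A}}\frac{P(x)}{Q(x)}\cdot D_f(P\|Q).$$
   Context: For a function $h:(0,\infty)\to\mathbb{R}$ and positive probability distributions $P,Q$ on a finite set $\mathcal{A}$, $D_h(P\|Q)=\sum_{x\in\mathcal{A}}Q(x)\,h\!\left(\frac{P(x)}{Q(x)}\right)$ (the $h$-divergence). The chi-squared divergence is $\chi^2(P,Q)=\sum_{x\in\mathcal{A}}\frac{(P(x)-Q(x))^2}{Q(x)}=\sum_{x\in\mathcal{A}}\frac{P(x)^2}{Q(x)}-1$. *)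

theory Defs
  imports "HOL-Analysis.Analysis"
begin

definition hdiv :: "(real \<Rightarrow> real) \<Rightarrow> 'a set \<Rightarrow> ('a \<Rightarrow> real) \<Rightarrow> ('a \<Rightarrow> real) \<Rightarrow> real" where
  "hdiv h A P Q = (\<Sum>x\<in>A. Q x * h (P x / Q x))"

definition chi2 :: "'a set \<Rightarrow> ('a \<Rightarrow> real) \<Rightarrow> ('a \<Rightarrow> real) \<Rightarrow> real" where
  "chi2 A P Q = (\<Sum>x\<in>A. (P x - Q x)^2 / Q x)"

end

theory Submission
  imports Defs
begin

text \<open>Write \<open>r = P/Q\<close>. Since \<open>g(t) = -t f(t)\<close>, the middle term is the Jensen gap
\<open>E\<^sub>P[f(r)] - f(E\<^sub>P[r])\<close>, because \<open>E\<^sub>P[r] = 1 + \<chi>\<^sup>2(P,Q)\<close>. Take a supporting line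
\<open>f c + s (y - c)\<close> of \<open>f\<close> and let \<open>e \<ge> 0\<close> be the excess of \<open>f\<close> over it. Then
\<open>min r \<cdot> E\<^sub>Q[e(r)] \<le> E\<^sub>P[e(r)] \<le> max r \<cdot> E\<^sub>Q[e(r)]\<close>. Choosing \<open>c = E\<^sub>P[r]\<close> makes
\<open>E\<^sub>P[e(r)]\<close> the Jensen gap and \<open>E\<^sub>Q[e(r)] \<ge> D\<^sub>f(P\<parallel>Q)\<close>; choosing \<open>c = 1\<close> makes
\<open>E\<^sub>Q[e(r)] = D\<^sub>f(P\<parallel>Q)\<close> and \<open>E\<^sub>P[e(r)]\<close> an upper bound for the gap.\<close>

lemma convex_on_supporting_line:
  fixes f :: "real \<Rightarrow> real"
  assumes f: "convex_on I f" and c: "c \<in> interior I"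
  obtains s where "\<And>y. y \<in> I \<Longrightarrow> f c + s * (y - c) \<le> f y"
proof -
  have slopes_le: "(f c - f a) / (c - a) \<le> (f b - f c) / (b - c)"
    if "a \<in> I" "b \<in> I" "a < c" "c < b" for a b
  proof -
    have "(f a - f c) / (a - c) \<le> (f c - f b) / (c - b)"
      using convex_on_slope_le[OF f \<open>a \<in> I\<close> \<open>b \<in> I\<close>, of c] that by linarith
    then show ?thesis
      by (metis minus_diff_eq minus_divide_divide)
  qed
  obtain e where "e > 0" and ball: "ball c e \<subseteq> I"
    using c by (auto simp: mem_interior)
  define a0 b0 where "a0 = c - e / 2" and "b0 = c + e / 2"
  have a0: "a0 \<in> I" "a0 < c" and b0: "b0 \<in> I" "c < b0"
    using ball \<open>e > 0\<close> by (auto simp: a0_def b0_def dist_real_def)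
  define S where "S = (\<lambda>a. (f c - f a) / (c - a)) ` {a\<in>I. a < c}"
  have "S \<noteq> {}"
    using a0 by (auto simp: S_def)
  have "bdd_above S"
    using slopes_le b0 by (auto simp: S_def bdd_above_def)
  have left: "(f c - f a) / (c - a) \<le> Sup S" if "a \<in> I" "a < c" for a
    using \<open>bdd_above S\<close> that by (auto intro!: cSup_upper simp: S_def)
  have right: "Sup S \<le> (f b - f c) / (b - c)" if "b \<in> I" "c < b" for b
    using \<open>S \<noteq> {}\<close> slopes_le that by (auto intro!: cSup_least simp: S_def)
  show ?thesis
  proof (rule that[of "Sup S"])
    fix y assume "y \<in> I"
    consider "y < c" | "y = c" | "c < y" by linarith
    then show "f c + Sup S * (y - c) \<le> f y"
    proof cases
      case 1
      with left[OF \<open>y \<in> I\<close>] show ?thesis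
        by (simp add: divide_le_eq algebra_simps)
    next
      case 3
      with right[OF \<open>y \<in> I\<close>] show ?thesis
        by (simp add: le_divide_eq algebra_simps)
    qed simp
  qed
qed

definition jensen_gap :: "(real \<Rightarrow> real) \<Rightarrow> 'a set \<Rightarrow> ('a \<Rightarrow> real) \<Rightarrow> ('a \<Rightarrow> real) \<Rightarrow> real" where
  "jensen_gap f A P Q = (\<Sum>x\<in>A. P x * f (P x / Q x)) - f (\<Sum>x\<in>A. P x * (P x / Q x))"

lemma sum_supporting_line_excess:
  fixes f :: "real \<Rightarrow> real" and c s :: real and P Q :: "'a \<Rightarrow> real"
  assumes Q: "\<And>x. x \<in> A \<Longrightarrow> Q x \<noteq> 0"
    and Psum: "(\<Sum>x\<in>A. P x) = 1" and Qsum: "(\<Sum>x\<in>A. Q x) = 1"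
  defines "e \<equiv> \<lambda>x. f (P x / Q x) - f c - s * (P x / Q x - c)"
  shows "(\<Sum>x\<in>A. Q x * e x) = hdiv f A P Q - f c - s * (1 - c)"
    and "(\<Sum>x\<in>A. P x * e x)
      = (\<Sum>x\<in>A. P x * f (P x / Q x)) - f c - s * ((\<Sum>x\<in>A. P x * (P x / Q x)) - c)"
proof -
  have "(\<Sum>x\<in>A. Q x * e x) = (\<Sum>x\<in>A. Q x * f (P x / Q x) - f c * Q x - s * (P x - c * Q x))"
    using Q by (intro sum.cong) (auto simp: e_def algebra_simps)
  then show "(\<Sum>x\<in>A. Q x * e x) = hdiv f A P Q - f c - s * (1 - c)"
    by (simp add: hdiv_def sum_subtractf sum_distrib_left[symmetric] Psum Qsum)
  have "(\<Sum>x\<in>A. P x * e x)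
      = (\<Sum>x\<in>A. P x * f (P x / Q x) - f c * P x - s * (P x * (P x / Q x) - c * P x))"
    by (intro sum.cong) (auto simp: e_def algebra_simps)
  then show "(\<Sum>x\<in>A. P x * e x)
      = (\<Sum>x\<in>A. P x * f (P x / Q x)) - f c - s * ((\<Sum>x\<in>A. P x * (P x / Q x)) - c)"
    by (simp add: sum_subtractf sum_distrib_left[symmetric] Psum)
qed

context
  fixes f :: "real \<Rightarrow> real" and A :: "'a set" and P Q :: "'a \<Rightarrow> real"
  assumes f_convex: "convex_on {0<..} f" and f1: "f 1 = 0"
    and Ppos: "\<And>x. x \<in> A \<Longrightarrow> P x > 0" and Qpos: "\<And>x. x \<in> A \<Longrightarrow> Q x > 0"
    and Psum: "(\<Sum>x\<in>A. P x) = 1" and Qsum: "(\<Sum>x\<in>A. Q x) = 1"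
begin

private lemma supporting_line:
  assumes "c > 0"
  obtains s where "\<And>y. y > 0 \<Longrightarrow> f c + s * (y - c) \<le> f y"
  using convex_on_supporting_line[OF f_convex, of c] assms by (auto simp: interior_open)

private lemma Q_nonzero: "x \<in> A \<Longrightarrow> Q x \<noteq> 0"
  using Qpos by force

private lemmas excess_sums = sum_supporting_line_excess[where f=f, OF Q_nonzero Psum Qsum]

private lemma mean_ratio_pos: "(\<Sum>x\<in>A. P x * (P x / Q x)) > 0"
proof -
  have "A \<noteq> {}" "finite A"
    using Psum by (auto intro: ccontr)
  then show ?thesis
    using Ppos Qpos by (intro sum_pos) auto
qed

lemma min_ratio_mult_hdiv_le_jensen_gap:
  assumes "0 \<le> m" and m: "\<And>x. x \<in> A \<Longrightarrow> m \<le> P x / Q x"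
  shows "m * hdiv f A P Q \<le> jensen_gap f A P Q"
proof -
  define \<mu> where "\<mu> = (\<Sum>x\<in>A. P x * (P x / Q x))"
  obtain s where s: "\<And>y. y > 0 \<Longrightarrow> f \<mu> + s * (y - \<mu>) \<le> f y"
    using supporting_line mean_ratio_pos unfolding \<mu>_def by blast
  have excess: "0 \<le> f (P x / Q x) - f \<mu> - s * (P x / Q x - \<mu>)" if "x \<in> A" for x
    using s[of "P x / Q x"] Ppos[OF that] Qpos[OF that] by simp
  have below_1: "f \<mu> + s * (1 - \<mu>) \<le> 0"
    using s[of 1] f1 by simp
  have "m * hdiv f A P Q \<le> m * (hdiv f A P Q - f \<mu> - s * (1 - \<mu>))"
    using below_1 \<open>0 \<le> m\<close> by (intro mult_left_mono) auto
  also have "\<dots> = m * (\<Sum>x\<in>A. Q x * (f (P x / Q x) - f \<mu> - s * (P x / Q x - \<mu>)))"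
    by (simp add: excess_sums(1))
  also have "\<dots> \<le> (\<Sum>x\<in>A. P x * (f (P x / Q x) - f \<mu> - s * (P x / Q x - \<mu>)))"
    using excess m Qpos unfolding sum_distrib_left mult.assoc[symmetric]
    by (intro sum_mono mult_right_mono) (auto simp: pos_le_divide_eq)
  also have "\<dots> = jensen_gap f A P Q"
    by (simp add: excess_sums(2) jensen_gap_def \<mu>_def)
  finally show ?thesis .
qed

lemma jensen_gap_le_max_ratio_mult_hdiv:
  assumes M: "\<And>x. x \<in> A \<Longrightarrow> P x / Q x \<le> M"
  shows "jensen_gap f A P Q \<le> M * hdiv f A P Q"
proof -
  define \<mu> where "\<mu> = (\<Sum>x\<in>A. P x * (P x / Q x))"
  obtain s where s: "\<And>y. y > 0 \<Longrightarrow> f 1 + s * (y - 1) \<le> f y"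
    using supporting_line[OF zero_less_one] by blast
  have excess: "0 \<le> f (P x / Q x) - f 1 - s * (P x / Q x - 1)" if "x \<in> A" for x
    using s[of "P x / Q x"] Ppos[OF that] Qpos[OF that] by simp
  have "jensen_gap f A P Q \<le> (\<Sum>x\<in>A. P x * f (P x / Q x)) - f 1 - s * (\<mu> - 1)"
    using s[of \<mu>] mean_ratio_pos by (simp add: jensen_gap_def \<mu>_def)
  also have "\<dots> = (\<Sum>x\<in>A. P x * (f (P x / Q x) - f 1 - s * (P x / Q x - 1)))"
    by (simp add: excess_sums(2) \<mu>_def)
  also have "\<dots> \<le> M * (\<Sum>x\<in>A. Q x * (f (P x / Q x) - f 1 - s * (P x / Q x - 1)))"
    using excess M Qpos unfolding sum_distrib_left mult.assoc[symmetric]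
    by (intro sum_mono mult_right_mono) (auto simp: pos_divide_le_eq)
  also have "\<dots> = M * hdiv f A P Q"
    using excess_sums(1)[where c=1 and s=s] f1 by simp
  finally show ?thesis .
qed

end

lemma hdiv_neg_mult_eq:
  fixes f g :: "real \<Rightarrow> real" and P Q :: "'a \<Rightarrow> real"
  assumes "\<And>t. t > 0 \<Longrightarrow> g t = - t * f t"
    and "\<And>x. x \<in> A \<Longrightarrow> P x > 0" and "\<And>x. x \<in> A \<Longrightarrow> Q x > 0"
  shows "hdiv g A P Q = - (\<Sum>x\<in>A. P x * f (P x / Q x))"
proof -
  have "Q x * g (P x / Q x) = - (P x * f (P x / Q x))" if "x \<in> A" for x
    using assms(1)[of "P x / Q x"] assms(2,3)[OF that] by simp
  then show ?thesis
    unfolding hdiv_def sum_negf[symmetric] by (intro sum.cong) auto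
qed

lemma chi2_eq_sum_sq_div:
  fixes P Q :: "'a \<Rightarrow> real"
  assumes "\<And>x. x \<in> A \<Longrightarrow> Q x \<noteq> 0"
    and "(\<Sum>x\<in>A. P x) = 1" and "(\<Sum>x\<in>A. Q x) = 1"
  shows "chi2 A P Q = (\<Sum>x\<in>A. P x ^ 2 / Q x) - 1"
proof -
  have "chi2 A P Q = (\<Sum>x\<in>A. P x ^ 2 / Q x - 2 * P x + Q x)"
    unfolding chi2_def using assms(1) by (intro sum.cong) (auto simp: field_simps power2_eq_square)
  also have "\<dots> = (\<Sum>x\<in>A. P x ^ 2 / Q x) - 1"
    using assms(2,3) by (simp add: sum.distrib sum_subtractf sum_distrib_left[symmetric])
  finally show ?thesis .
qed

theorem proposition5:
  fixes f g :: "real \<Rightarrow> real" and A :: "'a set" and P Q :: "'a \<Rightarrow> real"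
  assumes f_convex: "convex_on {0<..} f"
    and f1: "f 1 = 0"
    and g_def: "\<And>t. t > 0 \<Longrightarrow> g t = - t * f t"
    and g_convex: "convex_on {0<..} g"
    and finA: "finite A" and neA: "A \<noteq> {}"
    and Ppos: "\<And>x. x \<in> A \<Longrightarrow> P x > 0"
    and Qpos: "\<And>x. x \<in> A \<Longrightarrow> Q x > 0"
    and Psum: "(\<Sum>x\<in>A. P x) = 1"
    and Qsum: "(\<Sum>x\<in>A. Q x) = 1"
  shows "(MIN x\<in>A. P x / Q x) * hdiv f A P Q \<le> - hdiv g A P Q - f (1 + chi2 A P Q)
       \<and> - hdiv g A P Q - f (1 + chi2 A P Q) \<le> (MAX x\<in>A. P x / Q x) * hdiv f A P Q"
proof -
  have "1 + chi2 A P Q = (\<Sum>x\<in>A. P x * (P x / Q x))"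
    using chi2_eq_sum_sq_div[of A Q P] Qpos Psum Qsum by (force simp: power2_eq_square)
  then have gap: "- hdiv g A P Q - f (1 + chi2 A P Q) = jensen_gap f A P Q"
    using hdiv_neg_mult_eq[where A=A, OF g_def Ppos Qpos] by (simp add: jensen_gap_def)
  have "0 \<le> (MIN x\<in>A. P x / Q x)"
    using finA neA Ppos Qpos by (auto intro: less_imp_le)
  moreover have "x \<in> A \<Longrightarrow> (MIN x\<in>A. P x / Q x) \<le> P x / Q x"
     and "x \<in> A \<Longrightarrow> P x / Q x \<le> (MAX x\<in>A. P x / Q x)" for x
    using finA by auto
  ultimately show ?thesis
    unfolding gap
    using min_ratio_mult_hdiv_le_jensen_gap[OF f_convex f1 Ppos Qpos Psum Qsum]
      jensen_gap_le_max_ratio_mult_hdiv[OF f_convex f1 Ppos Qpos Psum Qsum]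
    by blast
qed

end
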